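(* Let $n\ge1$ be an integer and let $\varepsilon,\alpha,C_0,z_0$ be complex constants with $\alpha\neq0$. Then the rational function $$y(z)=\frac{C_0}{\alpha}+\frac{2(-1)^{n-1}(2n-1)!\,\varepsilon}{\alpha\,(n-1)!\,(z+z_0)^n}$$ is a solution of the ordinary differential equation $$\varepsilon\frac{d^ny}{dz^n}+\frac{\alpha}{2}y^2-C_0y+\frac{C_0^2}{2\alpha}=0 .$$ *)

theory Defs
  imports "HOL-Analysis.Analysis"
begin

end

theory Submission
  imports Defs
begin

text \<open>Completing the square, the equation reads
  \<open>\<epsilon> D\<^sup>n y + \<alpha>/2 (y - C\<^sub>0/\<alpha>)\<^sup>2 = 0\<close>, and \<open>y - C\<^sub>0/\<alpha> = A/(z+z\<^sub>0)\<^sup>n\<close>.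
  The \<open>n\<close>-th derivative of \<open>A/(z+z\<^sub>0)\<^sup>n\<close> is
  \<open>(-1)\<^sup>n (2n-1)!/(n-1)! A/(z+z\<^sub>0)\<^sup>2\<^sup>n\<close>, a pole of the same order \<open>2n\<close> as the
  quadratic term, and the coefficient \<open>A\<close> is exactly the one for which the two cancel.\<close>

lemma deriv_const_add: "deriv (\<lambda>w. c + f w) = deriv f"
proof -
  have "((\<lambda>w. c + f w) has_field_derivative D) (at z) \<longleftrightarrow> (f has_field_derivative D) (at z)"
    for z D
  proof
    assume "((\<lambda>w. c + f w) has_field_derivative D) (at z)"
    then have "((\<lambda>w. - c + (c + f w)) has_field_derivative 0 + D) (at z)"
      by (rule DERIV_add[OF DERIV_const])
    then show "(f has_field_derivative D) (at z)"
      by simp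
  qed (auto intro!: derivative_eq_intros)
  then show ?thesis
    by (intro ext) (simp add: deriv_def)
qed

lemma higher_deriv_const_add: "(deriv ^^ Suc k) (\<lambda>w. c + f w) = (deriv ^^ Suc k) f"
  by (simp only: funpow_Suc_right comp_def deriv_const_add)

lemma has_field_derivative_inverse_power_shift:
  fixes A a z :: "'a :: real_normed_field"
  assumes "z + a \<noteq> 0"
  shows "((\<lambda>w. A / (w + a) ^ m) has_field_derivative - of_nat m * A / (z + a) ^ Suc m) (at z)"
proof -
  have "((\<lambda>w. A / (w + a) ^ m) has_field_derivative
        - (A * (of_nat m * (z + a) ^ (m - 1) * 1)) / ((z + a) ^ m * (z + a) ^ m)) (at z)"
    using assms by (auto intro!: derivative_eq_intros)
  moreover have "- (A * (of_nat m * (z + a) ^ (m - 1) * 1)) / ((z + a) ^ m * (z + a) ^ m)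
      = - of_nat m * A / (z + a) ^ Suc m"
    using assms by (cases m) (simp_all add: divide_simps, simp add: algebra_simps)
  ultimately show ?thesis
    by simp
qed

lemma higher_deriv_inverse_power_shift:
  fixes A a z :: "'a :: real_normed_field"
  assumes "z + a \<noteq> 0"
  shows "(deriv ^^ k) (\<lambda>w. A / (w + a) ^ m) z
    = (-1) ^ k * pochhammer (of_nat m) k * A / (z + a) ^ (m + k)"
  using assms
proof (induction k arbitrary: z)
  case 0
  then show ?case by simp
next
  case (Suc k)
  define B where "B = (-1) ^ k * pochhammer (of_nat m) k * A"
  have "eventually (\<lambda>w. w \<in> - {- a}) (nhds z)"
    using Suc.prems by (intro eventually_nhds_in_open) (auto simp: add_eq_0_iff2)
  then have "eventually (\<lambda>w. (deriv ^^ k) (\<lambda>w. A / (w + a) ^ m) w = B / (w + a) ^ (m + k)) (nhds z)"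
    by (rule eventually_mono) (simp add: Suc.IH B_def add_eq_0_iff2)
  then have "(deriv ^^ Suc k) (\<lambda>w. A / (w + a) ^ m) z = deriv (\<lambda>w. B / (w + a) ^ (m + k)) z"
    by (simp add: deriv_cong_ev)
  also have "\<dots> = - of_nat (m + k) * B / (z + a) ^ Suc (m + k)"
    by (rule DERIV_imp_deriv has_field_derivative_inverse_power_shift Suc.prems)+
  also have "\<dots> = (-1) ^ Suc k * pochhammer (of_nat m) (Suc k) * A / (z + a) ^ (m + Suc k)"
    by (simp add: B_def pochhammer_rec' algebra_simps)
  finally show ?case .
qed

lemma pochhammer_of_nat_Suc_mult_fact:
  "pochhammer (of_nat (Suc j)) k * fact j = (fact (j + k) :: 'a :: {semiring_char_0, comm_semiring_1})"
proof -
  have "fact (j + k) = pochhammer (1 :: 'a) j * pochhammer (1 + of_nat j) k"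
    by (simp only: pochhammer_fact pochhammer_product')
  then show ?thesis
    by (simp add: pochhammer_fact[symmetric] mult.commute)
qed

lemma pochhammer_of_nat_same:
  assumes "n \<ge> 1"
  shows "pochhammer (of_nat n) n = (fact (2 * n - 1) / fact (n - 1) :: 'a :: field_char_0)"
proof -
  obtain j where j: "n = Suc j"
    using assms by (cases n) auto
  then have "n - 1 = j" and "2 * n - 1 = j + n"
    by simp_all
  then have "pochhammer (of_nat n) n * fact (n - 1) = (fact (2 * n - 1) :: 'a)"
    using pochhammer_of_nat_Suc_mult_fact[of j n] by (simp only: j[symmetric])
  then show ?thesis
    by (simp add: eq_divide_eq)
qed

lemma higher_deriv_const_add_inverse_power_self:
  fixes a c A z :: "'a :: real_normed_field"
  assumes "n \<ge> 1" and "z + a \<noteq> 0"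
  shows "(deriv ^^ n) (\<lambda>w. c + A / (w + a) ^ n) z
    = (-1) ^ n * (fact (2 * n - 1) / fact (n - 1)) * A / ((z + a) ^ n)\<^sup>2"
proof -
  obtain k where n: "n = Suc k"
    using assms(1) by (cases n) auto
  have "(deriv ^^ n) (\<lambda>w. c + A / (w + a) ^ n) z = (deriv ^^ n) (\<lambda>w. A / (w + a) ^ n) z"
    unfolding n higher_deriv_const_add ..
  also have "\<dots> = (-1) ^ n * pochhammer (of_nat n) n * A / (z + a) ^ (n + n)"
    by (rule higher_deriv_inverse_power_shift[OF assms(2)])
  finally show ?thesis
    by (simp add: pochhammer_of_nat_same[OF assms(1)] power_add power2_eq_square)
qed

theorem mainTheorem5:
  fixes n :: nat and \<epsilon> \<alpha> C\<^sub>0 z\<^sub>0 :: complex and y :: "complex \<Rightarrow> complex"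
  assumes "n \<ge> 1" and "\<alpha> \<noteq> 0"
    and y_def: "y = (\<lambda>z. C\<^sub>0 / \<alpha> + 2 * (-1) ^ (n - 1) * of_nat (fact (2 * n - 1)) * \<epsilon>
                      / (\<alpha> * of_nat (fact (n - 1)) * (z + z\<^sub>0) ^ n))"
  shows "\<forall>z. z + z\<^sub>0 \<noteq> 0 \<longrightarrow>
           \<epsilon> * (deriv ^^ n) y z + \<alpha> / 2 * (y z)\<^sup>2 - C\<^sub>0 * y z + C\<^sub>0\<^sup>2 / (2 * \<alpha>) = 0"
proof (intro allI impI)
  fix z assume z: "z + z\<^sub>0 \<noteq> 0"
  define P where "P = (fact (2 * n - 1) / fact (n - 1) :: complex)"
  define A where "A = 2 * (-1) ^ (n - 1) * P * \<epsilon> / \<alpha>"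
  define W where "W = (z + z\<^sub>0) ^ n"
  have y_eq: "y = (\<lambda>w. C\<^sub>0 / \<alpha> + A / (w + z\<^sub>0) ^ n)"
    unfolding y_def A_def P_def by (auto simp: field_simps)
  have "W \<noteq> 0"
    using z by (simp add: W_def)
  have y_z: "y z = C\<^sub>0 / \<alpha> + A / W"
    by (simp add: y_eq W_def)
  have "(-1) ^ n = - ((-1) ^ (n - 1) :: complex)"
    using \<open>n \<ge> 1\<close> by (cases n) auto
  then have deriv_y: "(deriv ^^ n) y z = - ((-1) ^ (n - 1) * P * A / W\<^sup>2)"
    unfolding y_eq W_def P_def by (simp add: higher_deriv_const_add_inverse_power_self[OF \<open>n \<ge> 1\<close> z])
  have "\<alpha> * A = 2 * (-1) ^ (n - 1) * P * \<epsilon>"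
    using \<open>\<alpha> \<noteq> 0\<close> by (simp add: A_def)
  have "\<epsilon> * (deriv ^^ n) y z + \<alpha> / 2 * (y z)\<^sup>2 - C\<^sub>0 * y z + C\<^sub>0\<^sup>2 / (2 * \<alpha>)
      = \<epsilon> * (deriv ^^ n) y z + \<alpha> / 2 * (A / W)\<^sup>2"
    unfolding y_z using \<open>\<alpha> \<noteq> 0\<close> \<open>W \<noteq> 0\<close> by (simp add: field_simps power2_eq_square)
  also have "\<dots> = A / (2 * W\<^sup>2) * (\<alpha> * A - 2 * (-1) ^ (n - 1) * P * \<epsilon>)"
    using \<open>W \<noteq> 0\<close> by (simp add: deriv_y field_simps power2_eq_square)
  also have "\<dots> = 0"
    by (simp add: \<open>\<alpha> * A = 2 * (-1) ^ (n - 1) * P * \<epsilon>\<close>)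
  finally show "\<epsilon> * (deriv ^^ n) y z + \<alpha> / 2 * (y z)\<^sup>2 - C\<^sub>0 * y z + C\<^sub>0\<^sup>2 / (2 * \<alpha>) = 0" .
qed

end
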